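(* Let $d\ge 3$ be an integer and let $\ell \ge 5$ be a prime. Let $(x,y)$ be an integer solution of \[ d(2x+d+1)\left(x^2+(d+1)x+\frac{d(d+1)}{2}\right)=2y^\ell . \] Then there are rational numbers $y_1,y_2$ and a pair $(\alpha,\beta)\in\mathcal{A}_d$ such that \[ 2x+d+1=\alpha y_1^\ell, \qquad x^2+(d+1)x+\frac{d(d+1)}{2}=\beta y_2^\ell . \] Moreover, if $3\le d\le 50$ then $y_1$ and $y_2$ are integers.
   Context: For a prime $q$ let $\mu_q=\operatorname{ord}_q(d^2-1)$ and $\nu_q=\operatorname{ord}_q(d)$. To each prime $q$ associate a finite set $T_q\subset\mathbb{Z}^2$: if $q\nmid d(d^2-1)$, $T_q=\{(0,0)\}$. For $q=2$: $T_2=\{(0,1-\nu_2)\}$ if $2\mid d$; $T_2=\{(1,0),(\mu_2/2,1-\mu_2/2),(3-\mu_2,\mu_2-2)\}$ if $2\nmid d$ and $\mu_2$ is even; $T_2=\{(1,0),(3-\mu_2,\mu_2-2)\}$ if $2\nmid d$ and $\mu_2$ is odd. For odd $q\mid d$: $T_q=\{(-\nu_q,0),(0,-\nu_q)\}$. For odd $q\mid d^2-1$: $T_q=\{(0,0),(-\mu_q,\mu_q),(\mu_q/2,-\mu_q/2)\}$ if $\mu_q$ is even, and $T_q=\{(0,0),(-\mu_q,\mu_q)\}$ if $\mu_q$ is odd. Then $\mathcal{A}_d$ is the (finite) set of pairs of positive rationals $(\alpha,\beta)$ with $(\operatorname{ord}_q(\alpha),\operatorname{ord}_q(\beta))\in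 T_q$ for every prime $q$. *)

theory Defs
  imports "HOL-Computational_Algebra.Computational_Algebra"
begin

definition rat_ord :: "nat \<Rightarrow> rat \<Rightarrow> int" where
  "rat_ord q r = (case quotient_of r of (a, b) \<Rightarrow>
      int (multiplicity (int q) a) - int (multiplicity (int q) b))"

definition T_set :: "int \<Rightarrow> nat \<Rightarrow> (int \<times> int) set" where
  "T_set d q =
    (let mu = int (multiplicity (int q) (d^2 - 1));
         nu = int (multiplicity (int q) d) in
     if \<not> (int q dvd d * (d^2 - 1)) then {(0, 0)}
     else if q = 2 then
       (if 2 dvd d then {(0, 1 - nu)}
        else if even mu then {(1, 0), (mu div 2, 1 - mu div 2), (3 - mu, mu - 2)}
        else {(1, 0), (3 - mu, mu - 2)})
     else if int q dvd d then {(- nu, 0), (0, - nu)}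
     else if even mu then {(0, 0), (- mu, mu), (mu div 2, - (mu div 2))}
     else {(0, 0), (- mu, mu)})"

definition A_set :: "int \<Rightarrow> (rat \<times> rat) set" where
  "A_set d = {(\<alpha>, \<beta>). \<alpha> > 0 \<and> \<beta> > 0 \<and>
     (\<forall>q. prime q \<longrightarrow> (rat_ord q \<alpha>, rat_ord q \<beta>) \<in> T_set d q)}"

end

theory Submission
  imports Defs
begin

text \<open>
  Put \<open>a = 2x + d + 1\<close> and \<open>b = x\<^sup>2 + (d + 1)x + d(d + 1)/2\<close>, so that
  \<open>d a b = 2 y\<^sup>l\<close> and \<open>4b = a\<^sup>2 + (d\<^sup>2 - 1)\<close>. At a prime \<open>p\<close> this gives
  \<open>v(d) + v(a) + v(b) = v(2) + l v(y)\<close>, and \<open>v(4b) = min (2 v(a)) (v(d\<^sup>2 - 1))\<close> unless the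
  two arguments of the minimum agree. Going through the possible positions of \<open>p\<close> relative
  to \<open>2 d (d\<^sup>2 - 1)\<close> and the three cases of the minimum, one finds a pair \<open>(t\<^sub>1, t\<^sub>2) \<in> T\<^sub>p\<close>
  with \<open>v(a) - t\<^sub>1\<close> and \<open>v(b) - t\<^sub>2\<close> non-negative multiples of \<open>l\<close>. Taking for \<open>\<alpha>\<close>, \<open>\<beta>\<close> the
  positive rationals with valuations \<open>t\<^sub>1\<close>, \<open>t\<^sub>2\<close> at every prime, the quotients \<open>a/\<alpha>\<close> and
  \<open>b/\<beta>\<close> are \<open>l\<close>-th powers of integers (the sign being absorbed because \<open>l\<close> is odd).
\<close>

section \<open>Rationals with prescribed valuations\<close>

definition prime_power_prod :: "(nat \<Rightarrow> nat) \<Rightarrow> int" where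
  "prime_power_prod e = (\<Prod>p | prime p \<and> e p \<noteq> 0. int p ^ e p)"

lemma prime_power_prod_pos: "prime_power_prod e > 0"
  unfolding prime_power_prod_def by (intro prod_pos) (auto simp: prime_gt_0_nat)

lemma multiplicity_prime_power_prod:
  assumes fin: "finite {p. prime p \<and> e p \<noteq> 0}" and q: "prime q"
  shows "multiplicity (int q) (prime_power_prod e) = e q"
proof -
  let ?S = "{p. prime p \<and> e p \<noteq> 0}"
  have "multiplicity (int q) (prime_power_prod e) = (\<Sum>p\<in>?S. multiplicity (int q) (int p ^ e p))"
    unfolding prime_power_prod_def using q fin
    by (intro prime_elem_multiplicity_prod_distrib) auto
  also have "\<dots> = (\<Sum>p\<in>?S. if p = q then e p else 0)"
    using q by (intro sum.cong refl) (auto simp: multiplicity_distinct_prime_power)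
  also have "\<dots> = e q"
    using fin q by simp
  finally show ?thesis .
qed

text \<open>Values of \<open>t\<close> at non-primes are ignored; \<open>t\<close> should vanish at almost all primes.\<close>

definition rat_of_ords :: "(nat \<Rightarrow> int) \<Rightarrow> rat" where
  "rat_of_ords t =
     of_int (prime_power_prod (\<lambda>p. nat (t p))) / of_int (prime_power_prod (\<lambda>p. nat (- t p)))"

lemma rat_of_ords_pos: "rat_of_ords t > 0"
  unfolding rat_of_ords_def using prime_power_prod_pos by simp

lemma rat_ord_of_int_div:
  assumes "prime q" "a \<noteq> 0" "b \<noteq> 0"
  shows "rat_ord q (of_int a / of_int b) = int (multiplicity (int q) a) - int (multiplicity (int q) b)"
proof -
  obtain n m where qo: "quotient_of (of_int a / of_int b) = (n, m)"
    by (cases "quotient_of (of_int a / of_int b)") auto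
  have m: "m > 0" using quotient_of_denom_pos[OF qo] .
  have "(of_int a / of_int b :: rat) = of_int n / of_int m" using quotient_of_div[OF qo] .
  then have "(of_int (a * m) :: rat) = of_int (n * b)"
    using assms m by (simp add: field_simps)
  then have am: "a * m = n * b" by (simp only: of_int_eq_iff)
  then have "n \<noteq> 0" using assms m by auto
  have "prime_elem (int q)" using assms by simp
  moreover have "multiplicity (int q) (a * m) = multiplicity (int q) (n * b)" using am by simp
  ultimately have "multiplicity (int q) a + multiplicity (int q) m = multiplicity (int q) n + multiplicity (int q) b"
    using \<open>n \<noteq> 0\<close> assms m by (simp add: prime_elem_multiplicity_mult_distrib)
  then show ?thesis unfolding rat_ord_def qo by simp
qed


lemma finite_prime_support_nat:
  assumes "finite {p. prime p \<and> t p \<noteq> 0}"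
  shows "finite {p. prime p \<and> nat (t p) \<noteq> 0}" "finite {p. prime p \<and> nat (- t p) \<noteq> 0}"
  by (auto intro: finite_subset[OF _ assms])

lemma rat_ord_rat_of_ords:
  assumes fin: "finite {p. prime p \<and> t p \<noteq> 0}" and q: "prime q"
  shows "rat_ord q (rat_of_ords t) = t q"
proof -
  have "rat_ord q (rat_of_ords t) =
      int (multiplicity (int q) (prime_power_prod (\<lambda>p. nat (t p))))
      - int (multiplicity (int q) (prime_power_prod (\<lambda>p. nat (- t p))))"
    unfolding rat_of_ords_def using q prime_power_prod_pos
    by (intro rat_ord_of_int_div) (auto simp: less_le)
  also have "\<dots> = int (nat (t q)) - int (nat (- t q))"
    by (simp only: multiplicity_prime_power_prod[OF finite_prime_support_nat(1)[OF fin] q]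
      multiplicity_prime_power_prod[OF finite_prime_support_nat(2)[OF fin] q])
  also have "\<dots> = t q" by simp
  finally show ?thesis .
qed

text \<open>\<open>p\<^sup>v\<close> is \<open>p\<^sup>t\<close> times an \<open>l\<close>-th power of an integer.\<close>

definition exceeds_by_multiple :: "nat \<Rightarrow> int \<Rightarrow> int \<Rightarrow> bool" where
  "exceeds_by_multiple l t v \<longleftrightarrow> t \<le> v \<and> int l dvd v - t"

lemma exceeds_by_multipleI: "v = t + int l * k \<Longrightarrow> t \<le> v \<Longrightarrow> exceeds_by_multiple l t v"
  by (simp add: exceeds_by_multiple_def)

lemma exceeds_by_multiple_refl: "exceeds_by_multiple l v v"
  by (simp add: exceeds_by_multiple_def)

lemma exceeds_by_multiple_eq:
  assumes "exceeds_by_multiple l t v" "l > 0"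
  shows "v = t + int l * int (nat ((v - t) div int l))"
proof -
  from assms(1) obtain k where k: "v - t = int l * k" "t \<le> v"
    unfolding exceeds_by_multiple_def by auto
  then have "0 \<le> int l * k" by linarith
  with assms(2) have "k \<ge> 0" by (simp add: zero_le_mult_iff)
  with k assms(2) show ?thesis by simp
qed

lemma finite_prime_divisors_int:
  fixes n :: int
  assumes "n \<noteq> 0"
  shows "finite {p. prime p \<and> int p dvd n}"
proof (rule finite_subset)
  show "{p. prime p \<and> int p dvd n} \<subseteq> {..nat \<bar>n\<bar>}"
  proof
    fix p assume "p \<in> {p. prime p \<and> int p dvd n}"
    then have "\<bar>int p\<bar> \<le> \<bar>n\<bar>" by (intro dvd_imp_le_int[OF assms]) simp
    then show "p \<in> {..nat \<bar>n\<bar>}" by (simp add: le_nat_iff)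
  qed
qed simp

lemma finite_prime_support_multiplicity:
  fixes n :: int
  assumes "n \<noteq> 0"
  shows "finite {p. prime p \<and> multiplicity (int p) n \<noteq> 0}"
proof (rule finite_subset[OF _ finite_prime_divisors_int[OF assms]])
  show "{p. prime p \<and> multiplicity (int p) n \<noteq> 0} \<subseteq> {p. prime p \<and> int p dvd n}"
  proof
    fix p assume "p \<in> {p. prime p \<and> multiplicity (int p) n \<noteq> 0}"
    then have "prime p" "multiplicity (int p) n \<noteq> 0" by simp_all
    then show "p \<in> {p. prime p \<and> int p dvd n}"
      using not_dvd_imp_multiplicity_0[of "int p" n] by auto
  qed
qed

lemma pos_int_eq_of_multiplicity_eq:
  fixes m m' :: int
  assumes "m > 0" "m' > 0" "\<And>q. prime q \<Longrightarrow> multiplicity (int q) m = multiplicity (int q) m'"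
  shows "m = m'"
proof -
  have "normalize m = normalize m'"
  proof (rule multiplicity_eq_imp_eq)
    fix r :: int
    assume "prime r"
    then obtain q where "r = int q" "prime q"
      using prime_ge_0_int by (metis nonneg_int_cases prime_nat_int_transfer)
    then show "multiplicity r m = multiplicity r m'" using assms(3) by simp
  qed (use assms in simp_all)
  with assms show ?thesis by simp
qed

lemma int_eq_rat_of_ords_mult_power:
  fixes n :: int and t :: "nat \<Rightarrow> int"
  assumes n: "n \<noteq> 0" and l: "odd l" and fin: "finite {p. prime p \<and> t p \<noteq> 0}"
    and exceeds: "\<And>p. prime p \<Longrightarrow> exceeds_by_multiple l (t p) (int (multiplicity (int p) n))"
  shows "\<exists>y. of_int n = rat_of_ords t * of_int y ^ l"
proof -
  define e where "e p = nat ((int (multiplicity (int p) n) - t p) div int l)" for p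
  define P where "P = prime_power_prod (\<lambda>p. nat (t p))"
  define Q where "Q = prime_power_prod (\<lambda>p. nat (- t p))"
  define z where "z = prime_power_prod e"
  have pos: "P > 0" "Q > 0" "z > 0"
    unfolding P_def Q_def z_def by (rule prime_power_prod_pos)+
  have mult_n: "int (multiplicity (int q) n) = t q + int l * int (e q)" if "prime q" for q
    unfolding e_def using exceeds_by_multiple_eq[OF exceeds[OF that]] l by (simp add: odd_pos)
  have "{p. prime p \<and> e p \<noteq> 0} \<subseteq> {p. prime p \<and> t p \<noteq> 0} \<union> {p. prime p \<and> multiplicity (int p) n \<noteq> 0}"
  proof (rule subsetI, rule ccontr)
    fix p assume p: "p \<in> {p. prime p \<and> e p \<noteq> 0}"
      and "p \<notin> {p. prime p \<and> t p \<noteq> 0} \<union> {p. prime p \<and> multiplicity (int p) n \<noteq> 0}"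
    then have "t p = 0" "multiplicity (int p) n = 0" by simp_all
    with mult_n[of p] p l show False by simp
  qed
  then have fin_e: "finite {p. prime p \<and> e p \<noteq> 0}"
    by (rule finite_subset) (use fin finite_prime_support_multiplicity[OF n] in simp)
  have "\<bar>n\<bar> * Q = P * z ^ l"
  proof (rule pos_int_eq_of_multiplicity_eq)
    fix q :: nat
    assume q: "prime q"
    have "int (multiplicity (int q) n + nat (- t q)) = int (nat (t q) + l * e q)"
      using mult_n[OF q] by (cases "t q \<ge> 0") simp_all
    then have "multiplicity (int q) n + nat (- t q) = nat (t q) + l * e q"
      by (simp only: of_nat_eq_iff)
    moreover have "multiplicity (int q) \<bar>n\<bar> = multiplicity (int q) n"
      using multiplicity_normalize_right[of "int q" n] by simp
    ultimately show "multiplicity (int q) (\<bar>n\<bar> * Q) = multiplicity (int q) (P * z ^ l)"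
      using q n pos multiplicity_prime_power_prod[OF fin_e q]
        multiplicity_prime_power_prod[OF finite_prime_support_nat(1)[OF fin] q]
        multiplicity_prime_power_prod[OF finite_prime_support_nat(2)[OF fin] q]
      by (simp add: P_def Q_def z_def prime_elem_multiplicity_mult_distrib
          prime_elem_multiplicity_power_distrib)
  qed (use n pos in simp_all)
  then have "n * Q = P * (sgn n * z) ^ l"
    using l n by (cases "n > 0") auto
  then have "of_int n = rat_of_ords t * of_int (sgn n * z) ^ l"
    using pos by (simp add: rat_of_ords_def P_def Q_def field_simps flip: of_int_mult of_int_power)
  then show ?thesis ..
qed

section \<open>The sets \<open>T\<^sub>q\<close>\<close>

lemma T_set_not_dvd: "\<not> int q dvd d * (d^2 - 1) \<Longrightarrow> T_set d q = {(0, 0)}"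
  by (simp add: T_set_def)

lemma T_set_odd_not_dvd:
  assumes "q \<noteq> 2" "\<not> int q dvd d"
  defines "M \<equiv> int (multiplicity (int q) (d^2 - 1))"
  shows "(0, 0) \<in> T_set d q" "(- M, M) \<in> T_set d q"
    and "even M \<Longrightarrow> (M div 2, - (M div 2)) \<in> T_set d q"
proof -
  have "(0, 0) \<in> T_set d q \<and> (- M, M) \<in> T_set d q \<and> (even M \<longrightarrow> (M div 2, - (M div 2)) \<in> T_set d q)"
  proof (cases "int q dvd d * (d^2 - 1)")
    case True
    with assms show ?thesis by (simp add: T_set_def Let_def)
  next
    case False
    have "\<not> int q dvd d^2 - 1" by (rule contrapos_nn[OF False]) (rule dvd_mult)
    then have "M = 0" unfolding M_def by (simp add: not_dvd_imp_multiplicity_0)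
    with False show ?thesis by (simp add: T_set_not_dvd)
  qed
  then show "(0, 0) \<in> T_set d q" "(- M, M) \<in> T_set d q"
    and "even M \<Longrightarrow> (M div 2, - (M div 2)) \<in> T_set d q" by blast+
qed

lemma T_set_odd_dvd:
  assumes "q \<noteq> 2" "int q dvd d"
  defines "N \<equiv> int (multiplicity (int q) d)"
  shows "(- N, 0) \<in> T_set d q" "(0, - N) \<in> T_set d q"
  using assms by (simp_all add: T_set_def Let_def)

lemma T_set_two_even: "even d \<Longrightarrow> (0, 1 - int (multiplicity 2 d)) \<in> T_set d 2"
  by (simp add: T_set_def Let_def)

lemma T_set_two_odd:
  assumes "odd d"
  defines "M \<equiv> int (multiplicity 2 (d^2 - 1))"
  shows "(1, 0) \<in> T_set d 2" "(3 - M, M - 2) \<in> T_set d 2"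
    and "even M \<Longrightarrow> (M div 2, 1 - M div 2) \<in> T_set d 2"
proof -
  from assms have "2 dvd d * (d^2 - 1)" by simp
  with assms show "(1, 0) \<in> T_set d 2" "(3 - M, M - 2) \<in> T_set d 2"
    and "even M \<Longrightarrow> (M div 2, 1 - M div 2) \<in> T_set d 2"
    by (simp_all add: T_set_def Let_def)
qed

lemma finite_prime_support_T_set:
  assumes "d * (d^2 - 1) \<noteq> 0" and t: "\<And>p. prime p \<Longrightarrow> t p \<in> T_set d p"
  shows "finite {p. prime p \<and> fst (t p) \<noteq> 0}" "finite {p. prime p \<and> snd (t p) \<noteq> 0}"
proof -
  have "t p = (0, 0)" if "prime p" "\<not> int p dvd d * (d^2 - 1)" for p
    using t[OF that(1)] T_set_not_dvd[OF that(2)] by simp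
  then have "{p. prime p \<and> t p \<noteq> (0, 0)} \<subseteq> {p. prime p \<and> int p dvd d * (d^2 - 1)}"
    by (intro subsetI) (simp, metis)
  then have fin: "finite {p. prime p \<and> t p \<noteq> (0, 0)}"
    by (rule finite_subset) (rule finite_prime_divisors_int[OF assms(1)])
  show "finite {p. prime p \<and> fst (t p) \<noteq> 0}"
    by (rule finite_subset[OF _ fin]) (intro subsetI, simp, metis prod.collapse fst_conv)
  show "finite {p. prime p \<and> snd (t p) \<noteq> 0}"
    by (rule finite_subset[OF _ fin]) (intro subsetI, simp, metis prod.collapse snd_conv)
qed

lemma rat_of_ords_in_A_set:
  assumes "d * (d^2 - 1) \<noteq> 0" and t: "\<And>p. prime p \<Longrightarrow> t p \<in> T_set d p"
  shows "(rat_of_ords (\<lambda>p. fst (t p)), rat_of_ords (\<lambda>p. snd (t p))) \<in> A_set d"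
  using t finite_prime_support_T_set[OF assms]
  by (simp add: A_set_def rat_of_ords_pos rat_ord_rat_of_ords)

section \<open>Valuations of the two factors\<close>

lemma prime_dvd_three_mult:
  fixes z :: int
  assumes "prime l" "l \<noteq> 3" "int l dvd 3 * z"
  shows "int l dvd z"
proof -
  have l: "prime (int l)" using assms(1) by simp
  have "\<not> int l dvd 3"
  proof
    assume "int l dvd 3"
    with l have "int l = 3" by (intro primes_dvd_imp_eq) simp_all
    with assms(2) show False by simp
  qed
  with l assms(3) show ?thesis by (simp add: prime_dvd_mult_iff)
qed

locale factored_equation =
  fixes d a b y :: int and l :: nat
  assumes d_ge_3: "d \<ge> 3" and prime_l: "prime l" and l_ge_5: "l \<ge> 5"
    and four_b: "4 * b = a^2 + (d^2 - 1)"
    and equation: "d * a * b = 2 * y ^ l"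
    and parity: "even (a + d + 1)"
begin

lemma disc_pos: "d^2 - 1 > 0"
proof -
  have "d * d \<ge> 3 * 3" using d_ge_3 by (intro mult_mono) auto
  then show ?thesis by (simp add: power2_eq_square)
qed

lemma d_disc_nonzero: "d * (d^2 - 1) \<noteq> 0"
  using d_ge_3 disc_pos by (intro no_zero_divisors) linarith+

lemma b_pos: "b > 0"
proof -
  have "a^2 \<ge> 0" by simp
  with four_b disc_pos show ?thesis by linarith
qed

lemma odd_l: "odd l"
  by (rule prime_odd_nat[OF prime_l]) (use l_ge_5 in simp)

lemma l_dvd_of_three_mult:
  assumes "3 * z = int l * m"
  obtains k where "z = int l * k"
proof -
  have "int l dvd 3 * z" using assms by (rule dvdI)
  with prime_l _ have "int l dvd z" by (rule prime_dvd_three_mult) (use l_ge_5 in simp)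
  then show ?thesis using that by (elim dvdE)
qed

end

locale factored_equation_at_prime = factored_equation +
  fixes p :: nat
  assumes prime_p: "prime p"
begin

abbreviation "va \<equiv> multiplicity (int p) a"
abbreviation "vb \<equiv> multiplicity (int p) b"
abbreviation "vd \<equiv> multiplicity (int p) d"
abbreviation "vD \<equiv> multiplicity (int p) (d^2 - 1)"
abbreviation "vy \<equiv> multiplicity (int p) y"

text \<open>No condition on \<open>a\<close> is needed when \<open>a = 0\<close>, because then \<open>a = \<alpha> \<cdot> 0\<^sup>l\<close> for every \<open>\<alpha>\<close>.\<close>

definition admissible :: "int \<times> int \<Rightarrow> bool" where
  "admissible t \<longleftrightarrow> exceeds_by_multiple l (snd t) (int vb) \<and>
     (a \<noteq> 0 \<longrightarrow> exceeds_by_multiple l (fst t) (int va))"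

lemma admissibleI:
  assumes "exceeds_by_multiple l s (int vb)" "a \<noteq> 0 \<Longrightarrow> exceeds_by_multiple l r (int va)"
  shows "admissible (r, s)"
  using assms by (simp add: admissible_def)

lemma y_nonzero: "a \<noteq> 0 \<Longrightarrow> y \<noteq> 0"
proof
  assume "a \<noteq> 0" "y = 0"
  with equation odd_l have "d * a * b = 0" by (simp add: power_0_left odd_pos)
  with \<open>a \<noteq> 0\<close> b_pos d_ge_3 show False by simp
qed

lemma valuation_equation:
  assumes "a \<noteq> 0"
  shows "int vd + int va + int vb = int (multiplicity (int p) 2) + int l * int vy"
proof -
  have "multiplicity (int p) (d * a * b) = multiplicity (int p) (2 * y ^ l)"
    using equation by simp
  with assms y_nonzero[OF assms] b_pos d_ge_3
  have "vd + va + vb = multiplicity (int p) 2 + l * vy"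
    by (simp add: prime_p prime_elem_multiplicity_mult_distrib prime_elem_multiplicity_power_distrib)
  then have "int (vd + va + vb) = int (multiplicity (int p) 2 + l * vy)" by (rule arg_cong)
  then show ?thesis by simp
qed

lemma valuation_a_sq: "a \<noteq> 0 \<Longrightarrow> multiplicity (int p) (a^2) = 2 * va"
  by (simp add: prime_p prime_elem_multiplicity_power_distrib)

lemma valuation_four_b: "multiplicity (int p) 4 + vb = multiplicity (int p) (a^2 + (d^2 - 1))"
proof -
  have "multiplicity (int p) (4 * b) = multiplicity (int p) 4 + vb"
    using b_pos by (simp add: prime_p prime_elem_multiplicity_mult_distrib)
  with four_b show ?thesis by simp
qed

lemma valuation_b_of_small_a:
  assumes "a \<noteq> 0" "2 * va < vD"
  shows "multiplicity (int p) 4 + vb = 2 * va"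
proof -
  have "multiplicity (int p) (a^2 + (d^2 - 1)) = multiplicity (int p) (a^2)"
    using assms disc_pos valuation_a_sq by (intro multiplicity_sum_lt) auto
  with valuation_four_b valuation_a_sq[OF assms(1)] show ?thesis by simp
qed

lemma valuation_b_of_large_a:
  assumes "a = 0 \<or> vD < 2 * va"
  shows "multiplicity (int p) 4 + vb = vD"
  using assms
proof
  assume "vD < 2 * va"
  then have "a \<noteq> 0" by auto
  with \<open>vD < 2 * va\<close> disc_pos have "multiplicity (int p) (d^2 - 1 + a^2) = vD"
    by (intro multiplicity_sum_lt) (auto simp: valuation_a_sq)
  with valuation_four_b show ?thesis by (simp add: add.commute)
qed (use valuation_four_b in simp)

lemma valuation_b_cases:
  obtains (small) "a \<noteq> 0" "2 * va < vD" "multiplicity (int p) 4 + vb = 2 * va"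
  | (large) "a = 0 \<or> vD < 2 * va" "multiplicity (int p) 4 + vb = vD"
  | (equal) "a \<noteq> 0" "2 * va = vD"
  using valuation_b_of_small_a valuation_b_of_large_a by (metis nat_neq_iff)

lemma valuation_disc_of_dvd:
  assumes "int p dvd d"
  shows "vD = 0"
proof -
  have "\<not> int p dvd d^2 - 1"
  proof
    assume "int p dvd d^2 - 1"
    moreover from assms have "int p dvd d^2" by (simp add: power2_eq_square)
    ultimately have "int p dvd d^2 - (d^2 - 1)" by (rule dvd_diff[rotated])
    then have "is_unit (int p)" by simp
    moreover have "prime (int p)" using prime_p by simp
    ultimately show False using not_prime_unit by blast
  qed
  then show ?thesis by (rule not_dvd_imp_multiplicity_0)
qed

lemma valuation_two_power_of_odd: "p \<noteq> 2 \<Longrightarrow> multiplicity (int p) (2 ^ k) = 0"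
  by (rule multiplicity_distinct_prime_power) (use prime_p in simp_all)

lemma admissible_odd_not_dvd:
  assumes "p \<noteq> 2" "\<not> int p dvd d"
  shows "\<exists>t\<in>T_set d p. admissible t"
proof -
  have "vd = 0" using assms(2) by (rule not_dvd_imp_multiplicity_0)
  with valuation_two_power_of_odd[OF assms(1), of 1]
  have key: "int va + int vb = int l * int vy" if "a \<noteq> 0"
    using valuation_equation[OF that] by simp
  have v4: "multiplicity (int p) 4 = 0"
    using valuation_two_power_of_odd[OF assms(1), of 2] by simp
  show ?thesis
  proof (cases rule: valuation_b_cases)
    case small
    with v4 key have "3 * int va = int l * int vy" by simp
    then obtain k where k: "int va = int l * k" by (rule l_dvd_of_three_mult)
    have "admissible (0, 0)"
    proof (rule admissibleI)
      show "exceeds_by_multiple l 0 (int vb)"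
        using k small v4 by (intro exceeds_by_multipleI[where k = "2 * k"]) simp_all
      show "exceeds_by_multiple l 0 (int va)"
        using k by (intro exceeds_by_multipleI[where k = k]) simp_all
    qed
    then show ?thesis using T_set_odd_not_dvd(1)[OF assms] by (rule bexI)
  next
    case large
    with v4 have "vb = vD" by simp
    have "admissible (- int vD, int vD)"
    proof (rule admissibleI)
      show "exceeds_by_multiple l (int vD) (int vb)"
        using \<open>vb = vD\<close> exceeds_by_multiple_refl by simp
      show "exceeds_by_multiple l (- int vD) (int va)" if "a \<noteq> 0"
        using key[OF that] \<open>vb = vD\<close> by (intro exceeds_by_multipleI[where k = "int vy"]) simp_all
    qed
    then show ?thesis using T_set_odd_not_dvd(2)[OF assms] by (rule bexI)
  next
    case equal
    then have "even (int vD)" and half: "int vD div 2 = int va" by presburger+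
    have "admissible (int va, - int va)"
    proof (rule admissibleI)
      show "exceeds_by_multiple l (- int va) (int vb)"
        using key[OF equal(1)] by (intro exceeds_by_multipleI[where k = "int vy"]) simp_all
      show "exceeds_by_multiple l (int va) (int va)" by (rule exceeds_by_multiple_refl)
    qed
    then show ?thesis using T_set_odd_not_dvd(3)[OF assms \<open>even (int vD)\<close>] unfolding half by (rule bexI)
  qed
qed

lemma admissible_odd_dvd:
  assumes "p \<noteq> 2" "int p dvd d"
  shows "\<exists>t\<in>T_set d p. admissible t"
proof -
  have v2: "multiplicity (int p) 2 = 0" and v4: "multiplicity (int p) 4 = 0"
    using valuation_two_power_of_odd[OF assms(1), of 1] valuation_two_power_of_odd[OF assms(1), of 2]
    by simp_all
  have vb0: "vb = 0" if "a = 0 \<or> va \<noteq> 0"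
    using valuation_b_of_large_a[OF _] valuation_disc_of_dvd[OF assms(2)] v4 that by simp
  show ?thesis
  proof (cases "vb = 0")
    case True
    have "admissible (- int vd, 0)"
    proof (rule admissibleI)
      show "exceeds_by_multiple l 0 (int vb)" using True exceeds_by_multiple_refl by simp
      show "exceeds_by_multiple l (- int vd) (int va)" if "a \<noteq> 0"
        using valuation_equation[OF that] True v2
        by (intro exceeds_by_multipleI[where k = "int vy"]) simp_all
    qed
    then show ?thesis using T_set_odd_dvd(1)[OF assms] by (rule bexI)
  next
    case False
    with vb0 have "a \<noteq> 0" "va = 0" by auto
    have "admissible (0, - int vd)"
    proof (rule admissibleI)
      show "exceeds_by_multiple l (- int vd) (int vb)"
        using valuation_equation[OF \<open>a \<noteq> 0\<close>] \<open>va = 0\<close> v2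
        by (intro exceeds_by_multipleI[where k = "int vy"]) simp_all
      show "exceeds_by_multiple l 0 (int va)"
        using \<open>va = 0\<close> exceeds_by_multiple_refl by simp
    qed
    then show ?thesis using T_set_odd_dvd(2)[OF assms] by (rule bexI)
  qed
qed

lemma admissible_two_even:
  assumes "p = 2" "even d"
  shows "\<exists>t\<in>T_set d p. admissible t"
proof -
  from parity assms(2) have "odd a" by simp
  then have "a \<noteq> 0" "va = 0" using assms(1) by (auto intro: not_dvd_imp_multiplicity_0)
  have "vd \<ge> 1"
    using assms d_ge_3 by (intro multiplicity_geI) auto
  have v2: "multiplicity (int p) 2 = 1" using assms(1) by simp
  have "admissible (0, 1 - int vd)"
  proof (rule admissibleI)
    show "exceeds_by_multiple l (1 - int vd) (int vb)"
      using valuation_equation[OF \<open>a \<noteq> 0\<close>] \<open>va = 0\<close> v2 \<open>vd \<ge> 1\<close>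
      by (intro exceeds_by_multipleI[where k = "int vy"]) simp_all
    show "exceeds_by_multiple l 0 (int va)"
      using \<open>va = 0\<close> exceeds_by_multiple_refl by simp
  qed
  then show ?thesis using T_set_two_even[OF assms(2)] assms(1) by (simp add: bexI)
qed

lemma valuation_disc_of_two_odd:
  assumes "p = 2" "odd d"
  shows "vD \<ge> 2"
proof -
  obtain k where "d = 2 * k + 1" using assms(2) by (rule oddE)
  then have "d^2 - 1 = 2^2 * (k^2 + k)" by (simp add: power2_eq_square algebra_simps)
  then show ?thesis using assms(1) disc_pos by (intro multiplicity_geI) auto
qed

lemma admissible_two_odd:
  assumes "p = 2" "odd d"
  shows "\<exists>t\<in>T_set d p. admissible t"
proof -
  have "vd = 0" using assms by (simp add: not_dvd_imp_multiplicity_0)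
  then have key: "int va + int vb = 1 + int l * int vy" if "a \<noteq> 0"
    using valuation_equation[OF that] assms(1) by simp
  have v4: "multiplicity (int p) 4 = 2"
    using assms(1) multiplicity_prime_power[of "2 :: int" 2] by simp
  from parity assms(2) have "even a" by simp
  then have va_pos: "va \<ge> 1" if "a \<noteq> 0"
    using assms(1) that by (intro multiplicity_geI) auto
  show ?thesis
  proof (cases rule: valuation_b_cases)
    case small
    with v4 key have "3 * (int va - 1) = int l * int vy" by simp
    then obtain k where k: "int va - 1 = int l * k" by (rule l_dvd_of_three_mult)
    have "admissible (1, 0)"
    proof (rule admissibleI)
      show "exceeds_by_multiple l 0 (int vb)"
        using k small v4 by (intro exceeds_by_multipleI[where k = "2 * k"]) simp_all
      show "exceeds_by_multiple l 1 (int va)"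
        using k va_pos[OF small(1)] by (intro exceeds_by_multipleI[where k = k]) simp_all
    qed
    then show ?thesis using T_set_two_odd(1)[OF assms(2)] assms(1) by (simp add: bexI)
  next
    case large
    with v4 have "int vD - 2 = int vb" by simp
    have "admissible (3 - int vD, int vD - 2)"
    proof (rule admissibleI)
      show "exceeds_by_multiple l (int vD - 2) (int vb)"
        unfolding \<open>int vD - 2 = int vb\<close> by (rule exceeds_by_multiple_refl)
      show "exceeds_by_multiple l (3 - int vD) (int va)" if "a \<noteq> 0"
        using key[OF that] va_pos[OF that] \<open>int vD - 2 = int vb\<close> valuation_disc_of_two_odd[OF assms]
        by (intro exceeds_by_multipleI[where k = "int vy"]) simp_all
    qed
    then show ?thesis using T_set_two_odd(2)[OF assms(2)] assms(1) by (simp add: bexI)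
  next
    case equal
    then have "even (int vD)" and half: "int vD div 2 = int va" by presburger+
    have "admissible (int va, 1 - int va)"
    proof (rule admissibleI)
      show "exceeds_by_multiple l (1 - int va) (int vb)"
        using key[OF equal(1)] va_pos[OF equal(1)]
        by (intro exceeds_by_multipleI[where k = "int vy"]) simp_all
      show "exceeds_by_multiple l (int va) (int va)" by (rule exceeds_by_multiple_refl)
    qed
    then show ?thesis using T_set_two_odd(3)[OF assms(2)] assms(1) \<open>even (int vD)\<close> half
      by (simp add: bexI)
  qed
qed

end

context factored_equation
begin

lemma exists_admissible_exponents:
  assumes "prime p"
  shows "\<exists>t\<in>T_set d p. exceeds_by_multiple l (snd t) (int (multiplicity (int p) b)) \<and>
           (a \<noteq> 0 \<longrightarrow> exceeds_by_multiple l (fst t) (int (multiplicity (int p) a)))"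
proof -
  interpret factored_equation_at_prime d a b y l p
    using assms by unfold_locales
  consider "p = 2" "even d" | "p = 2" "odd d" | "p \<noteq> 2" "int p dvd d" | "p \<noteq> 2" "\<not> int p dvd d"
    by blast
  then have "\<exists>t\<in>T_set d p. admissible t"
  proof cases
    case 1
    then show ?thesis by (rule admissible_two_even)
  next
    case 2
    then show ?thesis by (rule admissible_two_odd)
  next
    case 3
    then show ?thesis by (rule admissible_odd_dvd)
  next
    case 4
    then show ?thesis by (rule admissible_odd_not_dvd)
  qed
  then show ?thesis by (simp add: admissible_def)
qed

lemma exists_A_set_factorization:
  "\<exists>\<alpha> \<beta> y1 y2. (\<alpha>, \<beta>) \<in> A_set d \<and> of_int a = \<alpha> * of_int y1 ^ l \<and> of_int b = \<beta> * of_int y2 ^ l"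
proof -
  from exists_admissible_exponents obtain t where t: "\<And>p. prime p \<Longrightarrow> t p \<in> T_set d p \<and>
      exceeds_by_multiple l (snd (t p)) (int (multiplicity (int p) b)) \<and>
      (a \<noteq> 0 \<longrightarrow> exceeds_by_multiple l (fst (t p)) (int (multiplicity (int p) a)))"
    by metis
  then have T: "\<And>p. prime p \<Longrightarrow> t p \<in> T_set d p" by blast
  note fin = finite_prime_support_T_set[OF d_disc_nonzero T]
  define \<alpha> where "\<alpha> = rat_of_ords (\<lambda>p. fst (t p))"
  define \<beta> where "\<beta> = rat_of_ords (\<lambda>p. snd (t p))"
  have "(\<alpha>, \<beta>) \<in> A_set d"
    unfolding \<alpha>_def \<beta>_def using d_disc_nonzero T by (rule rat_of_ords_in_A_set)
  moreover obtain y2 where "of_int b = \<beta> * of_int y2 ^ l"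
    using int_eq_rat_of_ords_mult_power[OF _ odd_l fin(2)] b_pos t unfolding \<beta>_def by force
  moreover obtain y1 where "of_int a = \<alpha> * of_int y1 ^ l"
  proof (cases "a = 0")
    case True
    then show ?thesis using that[of 0] odd_l by (simp add: odd_pos)
  next
    case False
    then show ?thesis
      using that int_eq_rat_of_ords_mult_power[OF False odd_l fin(1)] t unfolding \<alpha>_def by force
  qed
  ultimately show ?thesis by blast
qed

end

lemma quadratic_factor_int:
  fixes d x :: int
  shows "(of_int x)^2 + (of_int d + 1) * of_int x + of_int d * (of_int d + 1) / 2
      = (of_int (x^2 + (d + 1) * x + d * (d + 1) div 2) :: rat)"
    and "4 * (x^2 + (d + 1) * x + d * (d + 1) div 2) = (2 * x + d + 1)^2 + (d^2 - 1)"
proof -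
  have half: "2 * (d * (d + 1) div 2) = d * (d + 1)" by simp
  then show "4 * (x^2 + (d + 1) * x + d * (d + 1) div 2) = (2 * x + d + 1)^2 + (d^2 - 1)"
    by algebra
  show "(of_int x)^2 + (of_int d + 1) * of_int x + of_int d * (of_int d + 1) / 2
      = (of_int (x^2 + (d + 1) * x + d * (d + 1) div 2) :: rat)"
    by (simp add: of_int_div)
qed

theorem lemma4p1:
  fixes d x y :: int and l :: nat
  assumes "d \<ge> 3" and "prime l" and "l \<ge> 5"
    and "of_int d * (2 * of_int x + of_int d + 1) *
         ((of_int x)^2 + (of_int d + 1) * of_int x + of_int d * (of_int d + 1) / 2)
         = (2 * (of_int y) ^ l :: rat)"
  shows "\<exists>y1 y2 :: rat. \<exists>\<alpha> \<beta>. (\<alpha>, \<beta>) \<in> A_set d \<and>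
           2 * of_int x + of_int d + 1 = \<alpha> * y1 ^ l \<and>
           (of_int x)^2 + (of_int d + 1) * of_int x + of_int d * (of_int d + 1) / 2 = \<beta> * y2 ^ l \<and>
           (d \<le> 50 \<longrightarrow> y1 \<in> \<int> \<and> y2 \<in> \<int>)"
proof -
  define a where "a = 2 * x + d + 1"
  define b where "b = x^2 + (d + 1) * x + d * (d + 1) div 2"
  have a_rat: "2 * of_int x + of_int d + 1 = (of_int a :: rat)"
    by (simp add: a_def)
  note b_rat = quadratic_factor_int(1)[of x d, folded b_def]
  have "of_int (d * a * b) = (of_int (2 * y ^ l) :: rat)"
    using assms(4) by (simp add: a_rat b_rat)
  then have "d * a * b = 2 * y ^ l" by (simp only: of_int_eq_iff)
  moreover have "4 * b = a^2 + (d^2 - 1)"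
    unfolding a_def b_def by (rule quadratic_factor_int(2))
  moreover have "even (a + d + 1)" by (simp add: a_def)
  ultimately interpret factored_equation d a b y l
    using assms(1-3) by unfold_locales
  \<comment> \<open>The construction yields integral y1 and y2 for every d.\<close>
  from exists_A_set_factorization obtain \<alpha> \<beta> y1 y2 where
    "(\<alpha>, \<beta>) \<in> A_set d" "of_int a = \<alpha> * of_int y1 ^ l" "of_int b = \<beta> * of_int y2 ^ l"
    by blast
  then show ?thesis
    unfolding a_rat b_rat by (intro exI[of _ "of_int y1"] exI[of _ "of_int y2"] exI conjI) auto
qed

end
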